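(* Let $X\in\mathbb{R}^{m\times n}$ be fixed, $V=\frac1nXX^\top$, $W^K,W^Q\in\mathbb{R}^{n\times n_k}$ with i.i.d. $\mathcal N(0,1)$ entries, $Y=\frac1nXW^KW^{Q,\top}X^\top$, $\tau>0$, and $A=I+\mathrm{Softmax}(\tau^{-1}Y)-\frac1m\mathbf 1\mathbf 1^\top$ (Softmax row-wise). Then $$\begin{aligned}\mathbb{E}[A^{\alpha\alpha'}A^{\beta\beta'}A^{\delta\delta'}A^{\omega\omega'}]={}&\delta_{\alpha\alpha'}\delta_{\beta\beta'}\delta_{\delta\delta'}\delta_{\omega\omega'}\\&+\frac{n_k}{\tau^2m^2}\Big(\delta_{\alpha\alpha'}\delta_{\beta\beta'}S_1^{\delta\delta',\omega\omega'}+\delta_{\alpha\alpha'}\delta_{\delta\delta'}S_1^{\beta\beta',\omega\omega'}+\delta_{\alpha\alpha'}\delta_{\omega\omega'}S_1^{\beta\beta',\delta\delta'}\\&\qquad+\delta_{\beta\beta'}\delta_{\delta\delta'}S_1^{\alpha\alpha',\omega\omega'}+\delta_{\beta\beta'}\delta_{\omega\omega'}S_1^{\alpha\alpha',\delta\delta'}+\delta_{\omega\omega'}\delta_{\delta\delta'}S_1^{\alpha\alpha',\beta\beta'}\Big)\\&+\frac{n_k}{2\tau^2m}\Big(\delta_{\alpha\alpha'}\delta_{\beta\beta'}\delta_{\delta\delta'}S_2^{\omega\omega'}+\delta_{\alpha\alpha'}\delta_{\beta\beta'}\delta_{\omega\omega'}S_2^{\delta\delta'}+\delta_{\alpha\a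lpha'}\delta_{\omega\omega'}\delta_{\delta\delta'}S_2^{\beta\beta'}+\delta_{\omega\omega'}\delta_{\beta\beta'}\delta_{\delta\delta'}S_2^{\alpha\alpha'}\Big)\\&+O(n_k\tau^{-3}).\end{aligned}$$
   Context: $\delta_{\alpha\beta}$ is the Kronecker delta. With $V^{\alpha\bar x}=\frac1m\sum_\nu V^{\alpha\nu}$, $V^{\bar x\bar x}=\frac1{m^2}\sum_{\nu,\kappa}V^{\nu\kappa}$, $\bar V=\frac1m\sum_\nu V^{\nu\nu}$: $S_1^{\alpha\delta,\beta\omega}=V^{\alpha\beta}(V^{\delta\omega}-V^{\delta\bar x}-V^{\omega\bar x}+V^{\bar x\bar x})$ and $S_2^{\alpha\delta}=V^{\alpha\alpha}(V^{\delta\delta}-2V^{\delta\bar x}+2V^{\bar x\bar x}-\bar V)$. $O(n_k\tau^{-3})$ denotes a remainder bounded by a constant (independent of $\tau$) times $n_k\tau^{-3}$ as $\tau\to\infty$. *)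

theory Defs
  imports "HOL-Probability.Probability"
begin

text \<open>Matrices are functions nat => nat => real, used only at indices below the
relevant dimensions. X is m x n, W^K and W^Q are n x nk.\<close>

definition kron :: "nat \<Rightarrow> nat \<Rightarrow> real" where
  "kron a b = (if a = b then 1 else 0)"

definition Vm :: "nat \<Rightarrow> (nat \<Rightarrow> nat \<Rightarrow> real) \<Rightarrow> nat \<Rightarrow> nat \<Rightarrow> real" where
  "Vm n X a b = (1 / real n) * (\<Sum>i<n. X a i * X b i)"

definition Vxb :: "nat \<Rightarrow> nat \<Rightarrow> (nat \<Rightarrow> nat \<Rightarrow> real) \<Rightarrow> nat \<Rightarrow> real" where
  "Vxb m n X a = (1 / real m) * (\<Sum>\<nu><m. Vm n X a \<nu>)"

definition Vxx :: "nat \<Rightarrow> nat \<Rightarrow> (nat \<Rightarrow> nat \<Rightarrow> real) \<Rightarrow> real" where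
  "Vxx m n X = (1 / (real m)^2) * (\<Sum>\<nu><m. \<Sum>\<kappa><m. Vm n X \<nu> \<kappa>)"

definition Vbar :: "nat \<Rightarrow> nat \<Rightarrow> (nat \<Rightarrow> nat \<Rightarrow> real) \<Rightarrow> real" where
  "Vbar m n X = (1 / real m) * (\<Sum>\<nu><m. Vm n X \<nu> \<nu>)"

definition S1 :: "nat \<Rightarrow> nat \<Rightarrow> (nat \<Rightarrow> nat \<Rightarrow> real) \<Rightarrow> nat \<Rightarrow> nat \<Rightarrow> nat \<Rightarrow> nat \<Rightarrow> real" where
  "S1 m n X a d b w = Vm n X a b * (Vm n X d w - Vxb m n X d - Vxb m n X w + Vxx m n X)"

definition S2 :: "nat \<Rightarrow> nat \<Rightarrow> (nat \<Rightarrow> nat \<Rightarrow> real) \<Rightarrow> nat \<Rightarrow> nat \<Rightarrow> real" where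
  "S2 m n X a d = Vm n X a a * (Vm n X d d - 2 * Vxb m n X d + 2 * Vxx m n X - Vbar m n X)"

definition Ym :: "nat \<Rightarrow> nat \<Rightarrow> (nat \<Rightarrow> nat \<Rightarrow> real) \<Rightarrow> (nat \<Rightarrow> nat \<Rightarrow> real)
    \<Rightarrow> (nat \<Rightarrow> nat \<Rightarrow> real) \<Rightarrow> nat \<Rightarrow> nat \<Rightarrow> real" where
  "Ym n nk X WK WQ a b =
     (1 / real n) * (\<Sum>i<n. \<Sum>j<n. \<Sum>k<nk. X a i * WK i k * WQ j k * X b j)"

definition softmax_row :: "nat \<Rightarrow> (nat \<Rightarrow> nat \<Rightarrow> real) \<Rightarrow> nat \<Rightarrow> nat \<Rightarrow> real" where
  "softmax_row m Z a b = exp (Z a b) / (\<Sum>c<m. exp (Z a c))"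

definition Am :: "nat \<Rightarrow> nat \<Rightarrow> nat \<Rightarrow> (nat \<Rightarrow> nat \<Rightarrow> real) \<Rightarrow> real \<Rightarrow> (nat \<Rightarrow> nat \<Rightarrow> real)
    \<Rightarrow> (nat \<Rightarrow> nat \<Rightarrow> real) \<Rightarrow> nat \<Rightarrow> nat \<Rightarrow> real" where
  "Am m n nk X \<tau> WK WQ a b =
     kron a b + softmax_row m (\<lambda>c e. Ym n nk X WK WQ c e / \<tau>) a b - 1 / real m"

text \<open>Joint law of (W^K, W^Q): i.i.d. standard normal entries indexed by
(i, k, True) for W^K_{ik} and (i, k, False) for W^Q_{ik}, i < n, k < nk.\<close>
definition gauss_weights :: "nat \<Rightarrow> nat \<Rightarrow> (nat \<times> nat \<times> bool \<Rightarrow> real) measure" where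
  "gauss_weights n nk =
     PiM ({..<n} \<times> {..<nk} \<times> UNIV) (\<lambda>_. density lborel std_normal_density)"

definition WKof :: "(nat \<times> nat \<times> bool \<Rightarrow> real) \<Rightarrow> nat \<Rightarrow> nat \<Rightarrow> real" where
  "WKof w i k = w (i, k, True)"

definition WQof :: "(nat \<times> nat \<times> bool \<Rightarrow> real) \<Rightarrow> nat \<Rightarrow> nat \<Rightarrow> real" where
  "WQof w i k = w (i, k, False)"

end

(*
  Subtracting the row mean from the logits u = Y/tau does not change the softmax, and for
  centred u a Taylor expansion of exp to third order gives
    softmax(u)_b = 1/m + u_b/m + (u_b^2 - mean_c u_c^2)/(2m) + O(t^3)   whenever all |u_c| <= t.
  So every entry of A is delta + L + Q + O(t^3) with L = O(t) and Q = O(t^2), and a product of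
  four such expansions agrees with its truncation at order two up to O(t^3).  In expectation
  E L = 0, and Wick's formula for the Gaussian weights, E[Y^ab Y^cd] = n_k V^ac V^bd, gives
  E[L L'] = n_k S_1 / (m tau)^2 and E Q = n_k S_2 / (2 m tau^2).  Finally |Y| is at most a
  constant times the squared norm S of the weights, so the error is bounded by a constant
  times E S^3 / tau^3, which is finite.
*)

theory Submission
  imports Defs
begin

section \<open>Moments of the standard Gaussian product measure\<close>

abbreviation std_normal :: "real measure" where
  "std_normal \<equiv> density lborel std_normal_density"

lemma prob_space_std_normal: "prob_space std_normal"
  by (intro prob_space_normal_density) simp

lemma integrable_std_normal_power: "integrable std_normal (\<lambda>t. t ^ k)"
  by (subst integrable_density) (auto simp: integrable_std_normal_moment)

lemma integral_std_normal_power: "(\<integral>t. t ^ k \<partial>std_normal) = (\<integral>t. std_normal_density t * t ^ k \<partial>lborel)"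
  by (subst integral_density) auto

lemma std_normal_moment_odd_eq_0: "odd k \<Longrightarrow> (\<integral>t. t ^ k \<partial>std_normal) = 0"
proof -
  assume "odd k"
  then obtain j where "k = 2 * j + 1" by (elim oddE)
  then show ?thesis
    using integral_std_normal_moment_odd[of j] by (simp only: integral_std_normal_power)
qed

lemma std_normal_moment_0_2: "k = 0 \<or> k = 2 \<Longrightarrow> (\<integral>t. t ^ k \<partial>std_normal) = 1"
  using prob_space.prob_space[OF prob_space_std_normal] integral_std_normal_moment_even[of 1]
  by (auto simp: integral_std_normal_power)

lemma prod_mset_image_eq_prod_power_count:
  assumes "finite I" "set_mset M \<subseteq> I"
  shows "(\<Prod>x\<in>#M. f x) = (\<Prod>p\<in>I. f p ^ count M p)"
  unfolding image_prod_mset_multiplicity using assms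
  by (intro prod.mono_neutral_left) (auto simp: not_in_iff)

lemma product_sigma_finite_std_normal: "product_sigma_finite (\<lambda>_. std_normal)"
  unfolding product_sigma_finite_def
  using prob_space_imp_sigma_finite[OF prob_space_std_normal] by simp

lemma
  assumes "finite I" "set_mset M \<subseteq> I"
  shows integrable_std_normal_PiM_monomial:
      "integrable (PiM I (\<lambda>_. std_normal)) (\<lambda>w. \<Prod>x\<in>#M. w x)"
    and integral_std_normal_PiM_monomial:
      "(\<integral>w. (\<Prod>x\<in>#M. w x) \<partial>PiM I (\<lambda>_. std_normal)) = (\<Prod>p\<in>I. \<integral>t. t ^ count M p \<partial>std_normal)"
  unfolding prod_mset_image_eq_prod_power_count[OF assms]
  using product_sigma_finite.product_integrable_prod[OF product_sigma_finite_std_normal, of I "\<lambda>p t. t ^ count M p"]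
    product_sigma_finite.product_integral_prod[OF product_sigma_finite_std_normal, of I "\<lambda>p t. t ^ count M p"]
  by (simp_all add: assms integrable_std_normal_power)

lemma integral_std_normal_PiM_monomial_odd:
  assumes "finite I" "set_mset M \<subseteq> I" "p \<in> I" "odd (count M p)"
  shows "(\<integral>w. (\<Prod>x\<in>#M. w x) \<partial>PiM I (\<lambda>_. std_normal)) = 0"
  using assms std_normal_moment_odd_eq_0[OF assms(4)]
  by (auto simp: integral_std_normal_PiM_monomial prod_zero_iff)

lemma integral_std_normal_PiM_monomial_quadratic:
  assumes "finite I" "set_mset M \<subseteq> I" "\<And>p. count M p = 0 \<or> count M p = 2"
  shows "(\<integral>w. (\<Prod>x\<in>#M. w x) \<partial>PiM I (\<lambda>_. std_normal)) = 1"
  using assms by (simp add: integral_std_normal_PiM_monomial std_normal_moment_0_2)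

lemma integral_std_normal_PiM_pair:
  assumes "finite I" "p \<in> I" "q \<in> I" "p \<noteq> q"
  shows "(\<integral>w. w p * w q \<partial>PiM I (\<lambda>_. std_normal)) = 0"
  using integral_std_normal_PiM_monomial_odd[of I "{#p, q#}" p] assms by simp

lemma integral_std_normal_PiM_product4:
  assumes "finite I" "a \<in> I" "b \<in> I" "c \<in> I" "d \<in> I"
    and "a \<noteq> b" "a \<noteq> d" "c \<noteq> b" "c \<noteq> d"
  shows "(\<integral>w. w a * w b * w c * w d \<partial>PiM I (\<lambda>_. std_normal)) = (if a = c \<and> b = d then 1 else 0)"
proof -
  let ?M = "{#a, b, c, d#}"
  have monomial: "(\<lambda>w. w a * w b * w c * w d) = (\<lambda>w. \<Prod>x\<in>#?M. w x)"
    by (simp add: mult_ac)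
  have "(\<integral>w. (\<Prod>x\<in>#?M. w x) \<partial>PiM I (\<lambda>_. std_normal)) = (if a = c \<and> b = d then 1 else 0)"
  proof (cases "a = c")
    case ac: True
    show ?thesis
    proof (cases "b = d")
      case True
      have "count ?M p = 0 \<or> count ?M p = 2" for p
        using ac True assms by auto
      with ac True assms show ?thesis by (subst integral_std_normal_PiM_monomial_quadratic) auto
    next
      case False
      with ac assms show ?thesis by (subst integral_std_normal_PiM_monomial_odd[where p = b]) auto
    qed
  next
    case False
    with assms show ?thesis by (subst integral_std_normal_PiM_monomial_odd[where p = a]) auto
  qed
  then show ?thesis by (simp only: monomial)
qed

section \<open>Second-order expansion of the softmax\<close>

lemma exp_2_le_9: "exp (2::real) \<le> 9"
proof -
  have "exp (1::real) * exp 1 \<le> 3 * 3"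
    using exp_le by (intro mult_mono) auto
  then show ?thesis by (simp add: mult_exp_exp)
qed

lemma abs_exp_minus_taylor2_le:
  fixes y :: real
  assumes "\<bar>y\<bar> \<le> 2"
  shows "\<bar>exp y - (1 + y + y^2 / 2)\<bar> \<le> 2 * \<bar>y\<bar>^3"
proof -
  obtain s where s: "\<bar>s\<bar> \<le> \<bar>y\<bar>" "exp y = (\<Sum>k<3. y ^ k / fact k) + exp s / fact 3 * y ^ 3"
    using Maclaurin_exp_le[of y 3] by blast
  have "exp s \<le> 9"
    using s(1) assms exp_2_le_9 by (meson abs_le_D1 exp_le_cancel_iff order_trans)
  have taylor: "exp y - (1 + y + y^2 / 2) = exp s / 6 * y ^ 3"
    using s(2) by (simp add: eval_nat_numeral fact_numeral)
  have "\<bar>exp y - (1 + y + y^2 / 2)\<bar> = exp s / 6 * \<bar>y\<bar>^3"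
    unfolding taylor by (simp add: abs_mult power_abs)
  also have "\<dots> \<le> 2 * \<bar>y\<bar>^3"
    using \<open>exp s \<le> 9\<close> by (intro mult_right_mono) auto
  finally show ?thesis .
qed

lemma sum_exp_ge:
  fixes u :: "nat \<Rightarrow> real"
  assumes "\<And>c. c < m \<Longrightarrow> \<bar>u c\<bar> \<le> 2"
  shows "real m / 9 \<le> (\<Sum>c<m. exp (u c))"
proof -
  have "1 / 9 \<le> exp (u c)" if "c < m" for c
  proof -
    have "1 / 9 \<le> exp (-2::real)"
      using exp_2_le_9 by (simp add: exp_minus field_simps)
    also have "\<dots> \<le> exp (u c)"
      using assms[OF that] by simp
    finally show ?thesis .
  qed
  then have "(\<Sum>c<m. 1 / 9) \<le> (\<Sum>c<m. exp (u c))"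
    by (intro sum_mono) auto
  then show ?thesis by simp
qed

lemma abs_exp_minus_taylor2_le_cube:
  fixes y :: real
  assumes "\<bar>y\<bar> \<le> 2 * t" "t \<le> 1"
  shows "\<bar>exp y - (1 + y + y^2 / 2)\<bar> \<le> 16 * t^3"
proof -
  have "\<bar>exp y - (1 + y + y^2 / 2)\<bar> \<le> 2 * \<bar>y\<bar>^3"
    using assms by (intro abs_exp_minus_taylor2_le) linarith
  also have "\<dots> \<le> 2 * (2 * t)^3"
    using assms(1) by (intro mult_left_mono power_mono) auto
  finally show ?thesis by (simp add: power_mult_distrib)
qed

lemma abs_divide_minus_le:
  fixes N D T e d :: real
  assumes "0 < d" "d \<le> D" "\<bar>N - T * D\<bar> \<le> e"
  shows "\<bar>N / D - T\<bar> \<le> e / d"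
proof -
  have "N / D - T = (N - T * D) / D"
    using assms(1,2) by (simp add: diff_divide_distrib)
  then have "\<bar>N / D - T\<bar> = \<bar>N - T * D\<bar> / D"
    using assms(1,2) by (simp add: abs_divide)
  also have "\<dots> \<le> e / d"
    using assms by (intro frac_le) auto
  finally show ?thesis .
qed

text \<open>Because the u c sum to zero, the denominator is m + (\<Sum>c<m. (u c)^2) / 2 up to O(m t^3).\<close>

lemma softmax_centered_expansion:
  fixes u :: "nat \<Rightarrow> real"
  assumes "b < m" "0 \<le> t" "t \<le> 1"
    and u: "\<And>c. c < m \<Longrightarrow> \<bar>u c\<bar> \<le> 2 * t" and "(\<Sum>c<m. u c) = 0"
  shows "\<bar>exp (u b) / (\<Sum>c<m. exp (u c))
           - (1 + u b + (u b)^2 / 2 - (\<Sum>c<m. (u c)^2) / (2 * m)) / m\<bar> \<le> 1260 * t^3"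
proof -
  define r where "r c = exp (u c) - (1 + u c + (u c)^2 / 2)" for c
  define q where "q = (\<Sum>c<m. (u c)^2) / 2"
  define R where "R = (\<Sum>c<m. r c)"
  define P where "P = u b + (u b)^2 / 2 - q / m"
  have m: "real m \<ge> 1" using \<open>b < m\<close> by simp
  have t_pow: "t^3 \<le> t^2" "t^2 \<le> t"
    using assms(2,3) power_decreasing[of 2 3 t] by (simp_all add: power2_eq_square mult_left_le_one_le)
  have u_sq: "(u c)^2 \<le> 4 * t^2" if "c < m" for c
    using power_mono[OF u[OF that] abs_ge_zero, of 2] by (simp add: power_mult_distrib)
  have r: "\<bar>r c\<bar> \<le> 16 * t^3" if "c < m" for c
    unfolding r_def using u[OF that] assms(3) by (rule abs_exp_minus_taylor2_le_cube)
  have R_cube: "\<bar>R\<bar> \<le> m * (16 * t^3)"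
    unfolding R_def using order_trans[OF sum_abs sum_mono[of "{..<m}" "\<lambda>c. \<bar>r c\<bar>", OF r]] by simp
  have R: "\<bar>R / m\<bar> \<le> 16 * t^3" "\<bar>R\<bar> \<le> m * (16 * t^2)"
    using R_cube m by (simp add: abs_divide divide_le_eq mult.commute)
      (use R_cube mult_left_mono[OF t_pow(1), of "16 * real m"] in linarith)
  have q: "0 \<le> q" "0 \<le> q / m" "q / m \<le> 2 * t^2" "q \<le> m * (2 * t^2)"
    unfolding q_def using sum_mono[of "{..<m}" "\<lambda>c. (u c)^2", OF u_sq] m
    by (auto simp: sum_nonneg divide_le_eq mult.commute)
  have P: "\<bar>P\<bar> \<le> 6 * t"
    unfolding P_def abs_le_iff using u[OF \<open>b < m\<close>] u_sq[OF \<open>b < m\<close>] t_pow q zero_le_power2[of "u b"]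
    by (simp only: abs_le_iff) linarith
  have "\<bar>P * (q + R) / m\<bar> \<le> (6 * t) * (m * (18 * t^2)) / m"
    unfolding abs_mult abs_divide abs_of_nat using P q R m assms(2)
    by (intro divide_right_mono mult_mono) (auto simp: abs_le_iff)
  also have "\<dots> = 108 * t^3"
    using m by (simp add: power2_eq_square power3_eq_cube)
  finally have PqR: "\<bar>P * (q + R) / m\<bar> \<le> 108 * t^3" .
  have "(\<Sum>c<m. exp (u c)) = m + q + R"
    using \<open>(\<Sum>c<m. u c) = 0\<close> by (simp add: R_def q_def r_def sum.distrib sum_subtractf sum_divide_distrib)
  then have remainder: "exp (u b) - (1 + P) / m * (\<Sum>c<m. exp (u c)) = r b - R / m - P * (q + R) / m"
    using m unfolding P_def r_def by (simp add: field_simps)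
  have "\<bar>exp (u b) - (1 + P) / m * (\<Sum>c<m. exp (u c))\<bar> \<le> 140 * t^3"
    unfolding remainder
    using abs_triangle_ineq4[of "r b - R / m"] abs_triangle_ineq4[of "r b" "R / m"] r[OF \<open>b < m\<close>] R PqR
    by linarith
  moreover have "m / 9 \<le> (\<Sum>c<m. exp (u c))"
    using u assms(3) by (intro sum_exp_ge) (smt (verit) mult_le_cancel_left1)
  ultimately have "\<bar>exp (u b) / (\<Sum>c<m. exp (u c)) - (1 + P) / m\<bar> \<le> 140 * t^3 / (m / 9)"
    using m by (intro abs_divide_minus_le) auto
  also have "\<dots> \<le> 1260 * t^3"
    using mult_right_mono[OF m, of "t^3"] m assms(2) by (simp add: field_simps)
  finally show ?thesis
    unfolding P_def q_def by (simp add: diff_divide_distrib add_divide_distrib)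
qed

lemma softmax_row_nonneg: "0 \<le> softmax_row m Z a b"
  unfolding softmax_row_def by (simp add: sum_nonneg)

lemma softmax_row_le_1:
  assumes "b < m"
  shows "softmax_row m Z a b \<le> 1"
proof -
  have "exp (Z a b) \<le> (\<Sum>c<m. exp (Z a c))"
    using assms by (intro member_le_sum) auto
  moreover have "0 < (\<Sum>c<m. exp (Z a c))"
    using exp_gt_zero[of "Z a b"] calculation by linarith
  ultimately show ?thesis
    unfolding softmax_row_def by (simp add: divide_le_eq_1)
qed

definition centered :: "nat \<Rightarrow> (nat \<Rightarrow> real) \<Rightarrow> nat \<Rightarrow> real" where
  "centered m x b = x b - (\<Sum>c<m. x c) / m"

definition softmax_lin :: "nat \<Rightarrow> (nat \<Rightarrow> real) \<Rightarrow> nat \<Rightarrow> real" where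
  "softmax_lin m x b = centered m x b / m"

definition softmax_quad :: "nat \<Rightarrow> (nat \<Rightarrow> real) \<Rightarrow> nat \<Rightarrow> real" where
  "softmax_quad m x b = ((centered m x b)^2 - (\<Sum>c<m. (centered m x c)^2) / m) / (2 * m)"

lemma sum_centered: "(\<Sum>c<m. centered m x c) = 0"
  by (cases "m = 0") (simp_all add: centered_def sum_subtractf)

lemma abs_centered_le:
  assumes "b < m" "\<And>c. c < m \<Longrightarrow> \<bar>x c\<bar> \<le> t"
  shows "\<bar>centered m x b\<bar> \<le> 2 * t"
proof -
  have "\<bar>\<Sum>c<m. x c\<bar> \<le> m * t"
    using order_trans[OF sum_abs sum_mono[of "{..<m}" "\<lambda>c. \<bar>x c\<bar>", OF assms(2)]] by simp
  then have "\<bar>(\<Sum>c<m. x c) / m\<bar> \<le> t"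
    using assms(1) by (simp add: abs_divide divide_le_eq mult.commute)
  then show ?thesis
    unfolding centered_def using assms(2)[OF assms(1)] by linarith
qed

lemma softmax_row_eq_centered:
  "softmax_row m Z a b = exp (centered m (Z a) b) / (\<Sum>c<m. exp (centered m (Z a) c))"
proof -
  define s where "s = (\<Sum>c<m. Z a c) / m"
  have "exp (Z a c) = exp s * exp (centered m (Z a) c)" for c
    by (simp add: centered_def s_def flip: exp_add)
  then show ?thesis
    unfolding softmax_row_def by (simp add: sum_distrib_left[symmetric])
qed

lemma
  assumes "b < m" "\<And>c. c < m \<Longrightarrow> \<bar>x c\<bar> \<le> t"
  shows abs_softmax_lin_le: "\<bar>softmax_lin m x b\<bar> \<le> 2 * t"
    and abs_softmax_quad_le: "\<bar>softmax_quad m x b\<bar> \<le> 4 * t^2"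
proof -
  have m: "real m \<ge> 1" using assms(1) by simp
  have "0 \<le> t"
    using assms(2)[OF assms(1)] by linarith
  have sq: "(centered m x c)^2 \<le> 4 * t^2" if "c < m" for c
    using abs_centered_le[of c m x t, OF that assms(2)] abs_le_square_iff[of "centered m x c" "2 * t"] \<open>0 \<le> t\<close>
    by (simp add: power_mult_distrib)
  have "\<bar>centered m x b\<bar> / m \<le> \<bar>centered m x b\<bar>"
    using m by (simp add: divide_le_eq mult_le_cancel_left1)
  then show "\<bar>softmax_lin m x b\<bar> \<le> 2 * t"
    unfolding softmax_lin_def using abs_centered_le[of b m x t, OF assms] by (simp add: abs_divide)
  have "(\<Sum>c<m. (centered m x c)^2) \<le> m * (4 * t^2)"
    using sum_mono[of "{..<m}" "\<lambda>c. (centered m x c)^2", OF sq] by simp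
  then have "(\<Sum>c<m. (centered m x c)^2) / m \<le> 4 * t^2"
    using m by (simp add: divide_le_eq mult.commute)
  moreover have "0 \<le> (\<Sum>c<m. (centered m x c)^2) / m"
    by (simp add: sum_nonneg)
  ultimately have "\<bar>(centered m x b)^2 - (\<Sum>c<m. (centered m x c)^2) / m\<bar> \<le> 4 * t^2"
    using sq[OF assms(1)] zero_le_power2[of "centered m x b"] by (simp only: abs_le_iff) linarith
  moreover have "\<bar>y / (2 * m)\<bar> \<le> \<bar>y\<bar>" for y :: real
    using m by (simp add: abs_divide divide_le_eq mult_le_cancel_left1)
  ultimately show "\<bar>softmax_quad m x b\<bar> \<le> 4 * t^2"
    unfolding softmax_quad_def by (meson order_trans)
qed

lemma softmax_row_expansion:
  assumes "b < m" "0 \<le> t" and Z: "\<And>c. c < m \<Longrightarrow> \<bar>Z a c\<bar> \<le> t"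
  shows "\<bar>softmax_row m Z a b - 1 / m - softmax_lin m (Z a) b - softmax_quad m (Z a) b\<bar> \<le> 1260 * t^3"
proof (cases "t \<le> 1")
  case True
  have "real m > 0"
    using assms(1) by simp
  have "(1 + u b + (u b)^2 / 2 - (\<Sum>c<m. (u c)^2) / (2 * m)) / m
      = 1 / m + softmax_lin m (Z a) b + softmax_quad m (Z a) b" if "u = centered m (Z a)" for u
    unfolding that softmax_lin_def softmax_quad_def using \<open>real m > 0\<close> by (simp add: field_simps)
  then show ?thesis
    using softmax_centered_expansion[OF assms(1,2) True abs_centered_le[of _ m "Z a" t, OF _ Z] sum_centered]
    unfolding softmax_row_eq_centered by (simp add: algebra_simps)
next
  case False
  have "1 / real m \<le> 1" "0 \<le> 1 / real m"
    using assms(1) by simp_all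
  moreover have "1 \<le> t^3" "t \<le> t^3" "t^2 \<le> t^3"
    using False power_increasing[of 1 3 t] power_increasing[of 2 3 t] by (simp_all add: one_le_power)
  moreover have "\<bar>softmax_lin m (Z a) b\<bar> \<le> 2 * t"
    using assms(1) Z by (rule abs_softmax_lin_le)
  moreover have "\<bar>softmax_quad m (Z a) b\<bar> \<le> 4 * t^2"
    using assms(1) Z by (rule abs_softmax_quad_le)
  ultimately show ?thesis
    using softmax_row_nonneg[of m Z a b] softmax_row_le_1[of b m Z a, OF assms(1)]
    by (simp only: abs_le_iff) linarith
qed

section \<open>Second-order jets\<close>

lemma abs_mult_le_mult:
  fixes a b :: real
  assumes "\<bar>a\<bar> \<le> A" "\<bar>b\<bar> \<le> B"
  shows "\<bar>a * b\<bar> \<le> A * B"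
  unfolding abs_mult using assms by (intro mult_mono) auto

text \<open>\<^term>\<open>jet2 K t x x0 x1 x2\<close>: x = x0 + x1 + x2 + O(t^3) with x0, x1, x2 of order 1, t, t^2,
  all with the explicit constant K; x itself is bounded by K as well, which makes the notion
  closed under products for every t \<ge> 0 and not only for small t.\<close>

definition jet2 :: "real \<Rightarrow> real \<Rightarrow> real \<Rightarrow> real \<Rightarrow> real \<Rightarrow> real \<Rightarrow> bool" where
  "jet2 K t x x0 x1 x2 \<longleftrightarrow>
     \<bar>x\<bar> \<le> K \<and> \<bar>x0\<bar> \<le> K \<and> \<bar>x1\<bar> \<le> K * t \<and> \<bar>x2\<bar> \<le> K * t^2 \<and> \<bar>x - x0 - x1 - x2\<bar> \<le> K * t^3"

lemma jet2_cong:
  "jet2 K t x x0 x1 x2 \<Longrightarrow> K = K' \<Longrightarrow> x0 = x0' \<Longrightarrow> x1 = x1' \<Longrightarrow> x2 = x2' \<Longrightarrow> jet2 K' t x x0' x1' x2'"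
  by simp

lemma jet2_nonneg: "jet2 K t x x0 x1 x2 \<Longrightarrow> 0 \<le> K"
  unfolding jet2_def by (meson abs_ge_zero order_trans)

lemma jet2_mult_coeffs:
  assumes "0 \<le> t" and x: "jet2 K t x x0 x1 x2" and y: "jet2 L t y y0 y1 y2"
  shows "\<bar>x * y\<bar> \<le> K * L" "\<bar>x0 * y0\<bar> \<le> K * L"
    and "\<bar>x0 * y1 + x1 * y0\<bar> \<le> 2 * (K * L) * t"
    and "\<bar>x0 * y2 + x1 * y1 + x2 * y0\<bar> \<le> 3 * (K * L) * t^2"
proof -
  note x' = x[unfolded jet2_def] and y' = y[unfolded jet2_def]
  show "\<bar>x * y\<bar> \<le> K * L" "\<bar>x0 * y0\<bar> \<le> K * L"
    using x' y' by (auto intro: abs_mult_le_mult)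
  have "\<bar>x0 * y1\<bar> \<le> K * (L * t)" "\<bar>x1 * y0\<bar> \<le> (K * t) * L"
    using x' y' by (auto intro: abs_mult_le_mult)
  then show "\<bar>x0 * y1 + x1 * y0\<bar> \<le> 2 * (K * L) * t"
    using abs_triangle_ineq[of "x0 * y1" "x1 * y0"] by (simp add: algebra_simps)
  have "\<bar>x0 * y2\<bar> \<le> K * (L * t^2)" "\<bar>x1 * y1\<bar> \<le> (K * t) * (L * t)" "\<bar>x2 * y0\<bar> \<le> (K * t^2) * L"
    using x' y' by (auto intro: abs_mult_le_mult)
  then show "\<bar>x0 * y2 + x1 * y1 + x2 * y0\<bar> \<le> 3 * (K * L) * t^2"
    using abs_triangle_ineq[of "x0 * y2 + x1 * y1" "x2 * y0"] abs_triangle_ineq[of "x0 * y2" "x1 * y1"]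
    by (simp add: algebra_simps power2_eq_square)
qed

lemma jet2_mult_remainder_small:
  assumes "0 \<le> t" "t \<le> 1" and x: "jet2 K t x x0 x1 x2" and y: "jet2 L t y y0 y1 y2"
  shows "\<bar>x * y - x0 * y0 - (x0 * y1 + x1 * y0) - (x0 * y2 + x1 * y1 + x2 * y0)\<bar> \<le> 7 * (K * L) * t^3"
proof -
  note x' = x[unfolded jet2_def] and y' = y[unfolded jet2_def]
  have L: "0 \<le> L" and KL: "0 \<le> K * L"
    using jet2_nonneg[OF x] jet2_nonneg[OF y] by simp_all
  have pow: "t^2 \<le> 1" "t^4 \<le> t^3"
    using assms(1,2) by (simp_all add: power_le_one power_decreasing)
  define ex where "ex = x - x0 - x1 - x2"
  define ey where "ey = y - y0 - y1 - y2"
  have "\<bar>y0 + y1 + y2\<bar> \<le> 3 * L"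
    using y' L assms(2) pow mult_left_le[of t L] mult_left_le[of "t^2" L]
      abs_triangle_ineq[of "y0 + y1" y2] abs_triangle_ineq[of y0 y1] by linarith
  then have "\<bar>ex * (y0 + y1 + y2)\<bar> \<le> (K * t^3) * (3 * L)"
    using x' unfolding ex_def by (intro abs_mult_le_mult) auto
  moreover have "\<bar>x * ey\<bar> \<le> K * (L * t^3)" "\<bar>x1 * y2\<bar> \<le> (K * t) * (L * t^2)"
    "\<bar>x2 * y1\<bar> \<le> (K * t^2) * (L * t)" "\<bar>x2 * y2\<bar> \<le> (K * t^2) * (L * t^2)"
    using x' y' unfolding ey_def by (auto intro: abs_mult_le_mult)
  moreover have "(K * t^2) * (L * t^2) \<le> K * L * t^3"
    using mult_left_mono[OF pow(2) KL] by (simp add: algebra_simps eval_nat_numeral)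
  moreover have "x * y - x0 * y0 - (x0 * y1 + x1 * y0) - (x0 * y2 + x1 * y1 + x2 * y0)
      = x * ey + ex * (y0 + y1 + y2) + x1 * y2 + x2 * y1 + x2 * y2"
    unfolding ex_def ey_def by (simp add: algebra_simps)
  moreover have "\<bar>a + b + c + d + e\<bar> \<le> \<bar>a\<bar> + \<bar>b\<bar> + \<bar>c\<bar> + \<bar>d\<bar> + \<bar>e\<bar>" for a b c d e :: real
    by linarith
  ultimately show ?thesis
    by (simp add: algebra_simps power2_eq_square power3_eq_cube)
qed

lemma jet2_mult:
  assumes t: "0 \<le> t" and x: "jet2 K t x x0 x1 x2" and y: "jet2 L t y y0 y1 y2"
  shows "jet2 (7 * K * L) t (x * y) (x0 * y0) (x0 * y1 + x1 * y0) (x0 * y2 + x1 * y1 + x2 * y0)"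
proof -
  have KL: "0 \<le> K * L"
    using jet2_nonneg[OF x] jet2_nonneg[OF y] by simp
  note coeffs = jet2_mult_coeffs[OF t x y]
  have "\<bar>x * y - x0 * y0 - (x0 * y1 + x1 * y0) - (x0 * y2 + x1 * y1 + x2 * y0)\<bar> \<le> 7 * (K * L) * t^3"
  proof (cases "t \<le> 1")
    case True
    then show ?thesis by (rule jet2_mult_remainder_small[OF t _ x y])
  next
    case False
    then have pow: "1 \<le> t^3" "t \<le> t^3" "t^2 \<le> t^3"
      using power_increasing[of 1 3 t] power_increasing[of 2 3 t] by (simp_all add: one_le_power)
    have "K * L \<le> K * L * t^3" "K * L * t \<le> K * L * t^3" "K * L * t^2 \<le> K * L * t^3"
      using mult_left_mono[OF pow(1) KL] mult_left_mono[OF pow(2) KL] mult_left_mono[OF pow(3) KL] by simp_all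
    then show ?thesis
      using coeffs
        abs_triangle_ineq4[of "x * y - x0 * y0 - (x0 * y1 + x1 * y0)" "x0 * y2 + x1 * y1 + x2 * y0"]
        abs_triangle_ineq4[of "x * y - x0 * y0" "x0 * y1 + x1 * y0"] abs_triangle_ineq4[of "x * y" "x0 * y0"]
      by (simp add: algebra_simps)
  qed
  moreover have "K * L \<le> 7 * K * L" "2 * (K * L) * t \<le> 7 * K * L * t" "3 * (K * L) * t^2 \<le> 7 * K * L * t^2"
    using KL t by (simp_all add: mult_right_mono)
  ultimately show ?thesis
    unfolding jet2_def using coeffs by (simp add: algebra_simps)
qed

lemma jet2_prod4:
  assumes "0 \<le> t"
    and "jet2 K t x1 d1 l1 q1" "jet2 K t x2 d2 l2 q2" "jet2 K t x3 d3 l3 q3" "jet2 K t x4 d4 l4 q4"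
  shows "jet2 (7^3 * K^4) t (x1 * x2 * x3 * x4) (d1 * d2 * d3 * d4)
           (l1 * d2 * d3 * d4 + d1 * l2 * d3 * d4 + d1 * d2 * l3 * d4 + d1 * d2 * d3 * l4)
           (q1 * d2 * d3 * d4 + d1 * q2 * d3 * d4 + d1 * d2 * q3 * d4 + d1 * d2 * d3 * q4
            + l1 * l2 * d3 * d4 + l1 * d2 * l3 * d4 + l1 * d2 * d3 * l4
            + d1 * l2 * l3 * d4 + d1 * l2 * d3 * l4 + d1 * d2 * l3 * l4)"
  by (rule jet2_cong[OF jet2_mult[OF assms(1) jet2_mult[OF assms(1) jet2_mult[OF assms(1,2,3)] assms(4)] assms(5)]])
    (simp_all add: algebra_simps eval_nat_numeral)

definition taylor2_prod4 ::
  "real \<Rightarrow> real \<Rightarrow> real \<Rightarrow> real \<Rightarrow> real \<Rightarrow> real \<Rightarrow> real \<Rightarrow> real \<Rightarrow> real \<Rightarrow> real \<Rightarrow> real \<Rightarrow> real \<Rightarrow> real" where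
  "taylor2_prod4 d1 d2 d3 d4 l1 l2 l3 l4 q1 q2 q3 q4 =
     d1 * d2 * d3 * d4
     + (l1 * d2 * d3 * d4 + d1 * l2 * d3 * d4 + d1 * d2 * l3 * d4 + d1 * d2 * d3 * l4)
     + (q1 * d2 * d3 * d4 + d1 * q2 * d3 * d4 + d1 * d2 * q3 * d4 + d1 * d2 * d3 * q4
        + l1 * l2 * d3 * d4 + l1 * d2 * l3 * d4 + l1 * d2 * d3 * l4
        + d1 * l2 * l3 * d4 + d1 * l2 * d3 * l4 + d1 * d2 * l3 * l4)"

lemma taylor2_prod4_eq_linear_combination:
  "taylor2_prod4 d1 d2 d3 d4 l1 l2 l3 l4 q1 q2 q3 q4 =
     d1 * d2 * d3 * d4
     + (d2 * d3 * d4) * l1 + (d1 * d3 * d4) * l2 + (d1 * d2 * d4) * l3 + (d1 * d2 * d3) * l4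
     + (d2 * d3 * d4) * q1 + (d1 * d3 * d4) * q2 + (d1 * d2 * d4) * q3 + (d1 * d2 * d3) * q4
     + (d3 * d4) * (l1 * l2) + (d2 * d4) * (l1 * l3) + (d2 * d3) * (l1 * l4)
     + (d1 * d4) * (l2 * l3) + (d1 * d3) * (l2 * l4) + (d1 * d2) * (l3 * l4)"
  unfolding taylor2_prod4_def by (simp add: algebra_simps)

lemma abs_prod4_minus_taylor2_le:
  assumes "0 \<le> t"
    and "jet2 K t x1 d1 l1 q1" "jet2 K t x2 d2 l2 q2" "jet2 K t x3 d3 l3 q3" "jet2 K t x4 d4 l4 q4"
  shows "\<bar>x1 * x2 * x3 * x4 - taylor2_prod4 d1 d2 d3 d4 l1 l2 l3 l4 q1 q2 q3 q4\<bar> \<le> 7^3 * K^4 * t^3"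
  using jet2_prod4[OF assms] unfolding jet2_def taylor2_prod4_def by (simp add: algebra_simps)

lemma abs_integral_diff_le_integral:
  fixes f g h :: "'a \<Rightarrow> real"
  assumes "integrable M f" "integrable M g" "integrable M h"
    and "\<And>x. x \<in> space M \<Longrightarrow> \<bar>f x - g x\<bar> \<le> h x"
  shows "\<bar>integral\<^sup>L M f - integral\<^sup>L M g\<bar> \<le> integral\<^sup>L M h"
proof -
  have "\<bar>integral\<^sup>L M f - integral\<^sup>L M g\<bar> = \<bar>\<integral>x. f x - g x \<partial>M\<bar>"
    using assms by simp
  also have "\<dots> \<le> (\<integral>x. \<bar>f x - g x\<bar> \<partial>M)"
    using integral_norm_bound[of M "\<lambda>x. f x - g x"] by simp
  also have "\<dots> \<le> integral\<^sup>L M h"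
    using assms by (intro integral_mono) auto
  finally show ?thesis .
qed

lemma matrix_entries_bounded:
  fixes X :: "nat \<Rightarrow> nat \<Rightarrow> real"
  shows "\<exists>B. \<forall>a<m. \<forall>i<n. \<bar>X a i\<bar> \<le> B"
proof (intro exI allI impI)
  fix a i assume "a < m" "i < n"
  have "\<bar>X a i\<bar> \<le> (\<Sum>i<n. \<bar>X a i\<bar>)"
    using \<open>i < n\<close> member_le_sum[of i "{..<n}" "\<lambda>i. \<bar>X a i\<bar>"] by simp
  also have "\<dots> \<le> (\<Sum>a<m. \<Sum>i<n. \<bar>X a i\<bar>)"
    using \<open>a < m\<close> member_le_sum[of a "{..<m}" "\<lambda>a. \<Sum>i<n. \<bar>X a i\<bar>"] by (simp add: sum_nonneg)
  finally show "\<bar>X a i\<bar> \<le> (\<Sum>a<m. \<Sum>i<n. \<bar>X a i\<bar>)" .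
qed

section \<open>Moments of the attention scores\<close>

lemma gauss_weights_PiM: "gauss_weights n nk = PiM ({..<n} \<times> {..<nk} \<times> UNIV) (\<lambda>_. std_normal)"
  unfolding gauss_weights_def ..

lemma prob_space_gauss_weights: "prob_space (gauss_weights n nk)"
  unfolding gauss_weights_PiM by (intro prob_space_PiM prob_space_std_normal)

lemma finite_measure_gauss_weights: "finite_measure (gauss_weights n nk)"
  using prob_space_gauss_weights by (rule prob_space.finite_measure)

definition scores :: "nat \<Rightarrow> nat \<Rightarrow> (nat \<Rightarrow> nat \<Rightarrow> real) \<Rightarrow> (nat \<times> nat \<times> bool \<Rightarrow> real) \<Rightarrow> nat \<Rightarrow> nat \<Rightarrow> real" where
  "scores n nk X w = Ym n nk X (WKof w) (WQof w)"

lemma scores_eq_sum: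
  "scores n nk X w a b = (\<Sum>i<n. \<Sum>j<n. \<Sum>k<nk. X a i * X b j / n * (w (i, k, True) * w (j, k, False)))"
  unfolding scores_def Ym_def WKof_def WQof_def by (simp add: sum_distrib_left algebra_simps)

lemma scores_mult_eq_sum:
  "scores n nk X w a b * scores n nk X w c d =
    (\<Sum>i<n. \<Sum>j<n. \<Sum>k<nk. \<Sum>i'<n. \<Sum>j'<n. \<Sum>k'<nk. X a i * X b j * X c i' * X d j' / n^2 *
       (w (i, k, True) * w (j, k, False) * w (i', k', True) * w (j', k', False)))"
  unfolding scores_eq_sum sum_distrib_right
  unfolding sum_distrib_left
  by (intro sum.cong refl) (simp add: power2_eq_square)

lemma
  assumes "i < n" "j < n" "k < nk"
  shows integrable_weight_pair:
      "integrable (gauss_weights n nk) (\<lambda>w. w (i, k, True) * w (j, k, False))"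
    and integral_weight_pair:
      "(\<integral>w. w (i, k, True) * w (j, k, False) \<partial>gauss_weights n nk) = 0"
  using assms integrable_std_normal_PiM_monomial[of "{..<n} \<times> {..<nk} \<times> UNIV" "{#(i, k, True), (j, k, False)#}"]
    integral_std_normal_PiM_pair[of "{..<n} \<times> {..<nk} \<times> UNIV" "(i, k, True)" "(j, k, False)"]
  by (simp_all add: gauss_weights_PiM)

lemma
  assumes "i < n" "j < n" "k < nk" "i' < n" "j' < n" "k' < nk"
  shows integrable_weight_product4:
      "integrable (gauss_weights n nk) (\<lambda>w. w (i, k, True) * w (j, k, False) * w (i', k', True) * w (j', k', False))"
    and integral_weight_product4:
      "(\<integral>w. w (i, k, True) * w (j, k, False) * w (i', k', True) * w (j', k', False) \<partial>gauss_weights n nk)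
         = (if i = i' \<and> j = j' \<and> k = k' then 1 else 0)"
  using assms integrable_std_normal_PiM_monomial[of "{..<n} \<times> {..<nk} \<times> UNIV"
      "{#(i, k, True), (j, k, False), (i', k', True), (j', k', False)#}"]
    integral_std_normal_PiM_product4[of "{..<n} \<times> {..<nk} \<times> UNIV" "(i, k, True)" "(j, k, False)" "(i', k', True)" "(j', k', False)"]
  by (simp_all add: gauss_weights_PiM mult_ac)

lemma integral_sum3_mult:
  fixes f :: "'i \<Rightarrow> 'j \<Rightarrow> 'k \<Rightarrow> 'a \<Rightarrow> real"
  assumes "\<And>i j k. i \<in> A \<Longrightarrow> j \<in> B \<Longrightarrow> k \<in> C \<Longrightarrow> integrable M (f i j k)"
  shows "(\<integral>x. (\<Sum>i\<in>A. \<Sum>j\<in>B. \<Sum>k\<in>C. c i j k * f i j k x) \<partial>M)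
    = (\<Sum>i\<in>A. \<Sum>j\<in>B. \<Sum>k\<in>C. c i j k * integral\<^sup>L M (f i j k))"
  using assms by (simp add: Bochner_Integration.integrable_sum)

lemma sum3_delta:
  fixes g :: "nat \<Rightarrow> nat \<Rightarrow> nat \<Rightarrow> real"
  assumes "i < n" "j < n" "k < nk"
  shows "(\<Sum>i'<n. \<Sum>j'<n. \<Sum>k'<nk. g i' j' k' * (if i = i' \<and> j = j' \<and> k = k' then 1 else 0)) = g i j k"
proof -
  have "g i' j' k' * (if i = i' \<and> j = j' \<and> k = k' then 1 else 0)
      = (if k = k' then if j = j' then if i = i' then g i' j' k' else 0 else 0 else 0)" for i' j' k'
    by simp
  then show ?thesis
    using assms by (simp only:) (simp add: sum.delta)
qed

lemma integrable_scores: "integrable (gauss_weights n nk) (\<lambda>w. scores n nk X w a b)"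
  unfolding scores_eq_sum by (intro Bochner_Integration.integrable_sum integrable_mult_right integrable_weight_pair) auto

lemma integral_scores: "(\<integral>w. scores n nk X w a b \<partial>gauss_weights n nk) = 0"
  unfolding scores_eq_sum
  by (subst integral_sum3_mult) (simp_all add: integrable_weight_pair integral_weight_pair)

lemma integrable_scores_mult: "integrable (gauss_weights n nk) (\<lambda>w. scores n nk X w a b * scores n nk X w c d)"
  unfolding scores_mult_eq_sum by (intro Bochner_Integration.integrable_sum integrable_mult_right integrable_weight_product4) auto

lemma integral_scores_mult:
  "(\<integral>w. scores n nk X w a b * scores n nk X w c d \<partial>gauss_weights n nk) = real nk * Vm n X a c * Vm n X b d"
proof -
  have "(\<integral>w. scores n nk X w a b * scores n nk X w c d \<partial>gauss_weights n nk) =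
    (\<Sum>i<n. \<Sum>j<n. \<Sum>k<nk. \<Sum>i'<n. \<Sum>j'<n. \<Sum>k'<nk.
       X a i * X b j * X c i' * X d j' / n^2 * (if i = i' \<and> j = j' \<and> k = k' then 1 else 0))"
    unfolding scores_mult_eq_sum
  proof (subst integral_sum3_mult[where c = "\<lambda>_ _ _. 1", simplified])
    show "integrable (gauss_weights n nk) (\<lambda>w. \<Sum>i'<n. \<Sum>j'<n. \<Sum>k'<nk. X a i * X b j * X c i' * X d j' / n^2 *
       (w (i, k, True) * w (j, k, False) * w (i', k', True) * w (j', k', False)))"
      if "i \<in> {..<n}" "j \<in> {..<n}" "k \<in> {..<nk}" for i j k
      using that by (intro Bochner_Integration.integrable_sum integrable_mult_right integrable_weight_product4) auto
    show "(\<Sum>i<n. \<Sum>j<n. \<Sum>k<nk. \<integral>w. (\<Sum>i'<n. \<Sum>j'<n. \<Sum>k'<nk. X a i * X b j * X c i' * X d j' / n^2 *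
       (w (i, k, True) * w (j, k, False) * w (i', k', True) * w (j', k', False))) \<partial>gauss_weights n nk)
      = (\<Sum>i<n. \<Sum>j<n. \<Sum>k<nk. \<Sum>i'<n. \<Sum>j'<n. \<Sum>k'<nk.
       X a i * X b j * X c i' * X d j' / n^2 * (if i = i' \<and> j = j' \<and> k = k' then 1 else 0))"
      by (intro sum.cong refl, subst integral_sum3_mult) (simp_all add: integrable_weight_product4 integral_weight_product4
          del: mult_cancel_left1 mult_zero_right)
  qed
  also have "\<dots> = (\<Sum>i<n. \<Sum>j<n. \<Sum>k<nk. X a i * X b j * X c i * X d j / n^2)"
    by (intro sum.cong refl sum3_delta) auto
  also have "\<dots> = real nk * Vm n X a c * Vm n X b d"
    unfolding Vm_def by (simp add: sum_distrib_left sum_distrib_right power2_eq_square algebra_simps)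
  finally show ?thesis .
qed

lemma centered_divide: "centered m (\<lambda>e. x e / \<tau>) b = centered m x b / \<tau>"
  unfolding centered_def by (simp add: sum_divide_distrib[symmetric] diff_divide_distrib)

lemma centered_mult_centered:
  "centered m x b * centered m y d =
     x b * y d - (\<Sum>f<m. x b * y f) / m - (\<Sum>e<m. x e * y d) / m + (\<Sum>e<m. \<Sum>f<m. x e * y f) / m^2"
  unfolding centered_def sum_product[symmetric] sum_distrib_left[symmetric] sum_distrib_right[symmetric]
  by (cases "m = 0") (simp_all add: field_simps power2_eq_square)

lemma integrable_centered_scores:
  "integrable (gauss_weights n nk) (\<lambda>w. centered m (scores n nk X w a) b)"
  unfolding centered_def
  by (intro Bochner_Integration.integrable_diff integrable_divide Bochner_Integration.integrable_sum integrable_scores)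

lemma integral_centered_scores:
  "(\<integral>w. centered m (scores n nk X w a) b \<partial>gauss_weights n nk) = 0"
  unfolding centered_def
  by (simp add: Bochner_Integration.integrable_sum integrable_scores integral_scores)

lemma integrable_centered_scores_mult:
  "integrable (gauss_weights n nk) (\<lambda>w. centered m (scores n nk X w a) b * centered m (scores n nk X w c) d)"
  unfolding centered_mult_centered
  by (intro Bochner_Integration.integrable_diff Bochner_Integration.integrable_add integrable_divide
      Bochner_Integration.integrable_sum integrable_scores_mult)

lemma Vm_sym: "Vm n X a b = Vm n X b a"
  unfolding Vm_def by (simp add: mult.commute)

lemma integral_centered_scores_mult:
  "(\<integral>w. centered m (scores n nk X w a) b * centered m (scores n nk X w c) d \<partial>gauss_weights n nk)
     = real nk * S1 m n X a b c d"
proof -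
  have "(\<integral>w. centered m (scores n nk X w a) b * centered m (scores n nk X w c) d \<partial>gauss_weights n nk)
     = real nk * Vm n X a c * Vm n X b d
       - (\<Sum>f<m. real nk * Vm n X a c * Vm n X b f) / m
       - (\<Sum>e<m. real nk * Vm n X a c * Vm n X e d) / m
       + (\<Sum>e<m. \<Sum>f<m. real nk * Vm n X a c * Vm n X e f) / m^2"
    unfolding centered_mult_centered
    by (simp add: Bochner_Integration.integrable_sum integrable_scores_mult integral_scores_mult)
  also have "\<dots> = real nk * S1 m n X a b c d"
    unfolding S1_def Vxb_def Vxx_def
    by (simp add: sum_distrib_left sum_distrib_right algebra_simps power2_eq_square Vm_sym sum_divide_distrib)
  finally show ?thesis .
qed

lemma S2_eq_S1:
  assumes "m > 0"
  shows "S2 m n X a b = S1 m n X a b a b - (\<Sum>c<m. S1 m n X a c a c) / m"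
proof -
  have "(1 / real m) * (\<Sum>c<m. Vxb m n X c) = Vxx m n X"
    unfolding Vxb_def Vxx_def by (simp add: sum_divide_distrib[symmetric] power2_eq_square)
  moreover have "(1 / real m) * (\<Sum>c<m. S1 m n X a c a c)
      = Vm n X a a * (Vbar m n X - 2 * ((1 / real m) * (\<Sum>c<m. Vxb m n X c)) + Vxx m n X)"
    unfolding S1_def Vbar_def using assms
    by (simp add: sum_distrib_left[symmetric] sum.distrib sum_subtractf algebra_simps sum_distrib_right[symmetric])
  ultimately show ?thesis
    unfolding S1_def S2_def by (simp add: algebra_simps)
qed

context
  fixes m n nk :: nat and X :: "nat \<Rightarrow> nat \<Rightarrow> real" and \<tau> :: real
begin

abbreviation scores_lin :: "(nat \<times> nat \<times> bool \<Rightarrow> real) \<Rightarrow> nat \<Rightarrow> nat \<Rightarrow> real" where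
  "scores_lin w a b \<equiv> softmax_lin m (\<lambda>e. scores n nk X w a e / \<tau>) b"

abbreviation scores_quad :: "(nat \<times> nat \<times> bool \<Rightarrow> real) \<Rightarrow> nat \<Rightarrow> nat \<Rightarrow> real" where
  "scores_quad w a b \<equiv> softmax_quad m (\<lambda>e. scores n nk X w a e / \<tau>) b"

lemma scores_lin_eq: "scores_lin w a b = centered m (scores n nk X w a) b / (m * \<tau>)"
  unfolding softmax_lin_def centered_divide by simp

lemma scores_quad_eq:
  "scores_quad w a b = (centered m (scores n nk X w a) b * centered m (scores n nk X w a) b
     - (\<Sum>c<m. centered m (scores n nk X w a) c * centered m (scores n nk X w a) c) / m) / (2 * m * \<tau>^2)"
  unfolding softmax_quad_def centered_divide
  by (simp add: power_divide power2_eq_square sum_divide_distrib[symmetric] diff_divide_distrib mult_ac)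

lemma integrable_scores_lin: "integrable (gauss_weights n nk) (\<lambda>w. scores_lin w a b)"
  unfolding scores_lin_eq by (intro integrable_divide integrable_centered_scores)

lemma integral_scores_lin: "(\<integral>w. scores_lin w a b \<partial>gauss_weights n nk) = 0"
  unfolding scores_lin_eq by (simp add: integral_centered_scores)

lemma integrable_scores_lin_mult: "integrable (gauss_weights n nk) (\<lambda>w. scores_lin w a b * scores_lin w c d)"
  unfolding scores_lin_eq times_divide_times_eq
  by (intro integrable_divide integrable_centered_scores_mult)

lemma integral_scores_lin_mult:
  "(\<integral>w. scores_lin w a b * scores_lin w c d \<partial>gauss_weights n nk) = real nk * S1 m n X a b c d / (m * \<tau>)^2"
  unfolding scores_lin_eq times_divide_times_eq
  by (simp add: integral_centered_scores_mult power2_eq_square)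

lemma integrable_scores_quad: "integrable (gauss_weights n nk) (\<lambda>w. scores_quad w a b)"
  unfolding scores_quad_eq
  by (intro integrable_divide Bochner_Integration.integrable_diff Bochner_Integration.integrable_sum
      integrable_centered_scores_mult)

lemma integral_scores_quad:
  assumes "m > 0"
  shows "(\<integral>w. scores_quad w a b \<partial>gauss_weights n nk) = real nk * S2 m n X a b / (2 * m * \<tau>^2)"
  unfolding scores_quad_eq S2_eq_S1[OF assms]
  by (simp add: Bochner_Integration.integrable_sum integrable_centered_scores_mult integral_centered_scores_mult
      sum_distrib_left[symmetric] right_diff_distrib)

end

section \<open>The fourth moment of A\<close>

definition weight_sqnorm :: "nat \<Rightarrow> nat \<Rightarrow> (nat \<times> nat \<times> bool \<Rightarrow> real) \<Rightarrow> real" where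
  "weight_sqnorm n nk w = (\<Sum>p\<in>{..<n} \<times> {..<nk} \<times> UNIV. (w p)^2)"

lemma weight_sqnorm_nonneg: "0 \<le> weight_sqnorm n nk w"
  unfolding weight_sqnorm_def by (simp add: sum_nonneg)

lemma abs_scores_le:
  assumes X: "\<And>a i. a < m \<Longrightarrow> i < n \<Longrightarrow> \<bar>X a i\<bar> \<le> B" and "a < m" "b < m"
  shows "\<bar>scores n nk X w a b\<bar> \<le> real n * real nk * B^2 * weight_sqnorm n nk w"
proof -
  have summand_le: "\<bar>X a i * X b j / n * (w (i, k, True) * w (j, k, False))\<bar> \<le> B^2 / n * weight_sqnorm n nk w"
    if "i < n" "j < n" "k < nk" for i j k
  proof -
    have "\<bar>X a i * X b j\<bar> \<le> B * B"
      using X that assms by (intro abs_mult_le_mult) auto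
    moreover have "\<bar>w (i, k, True) * w (j, k, False)\<bar> \<le> ((w (i, k, True))^2 + (w (j, k, False))^2) / 2"
      using sum_squares_bound[of "\<bar>w (i, k, True)\<bar>" "\<bar>w (j, k, False)\<bar>"] by (simp add: abs_mult)
    moreover have "(w (i, k, True))^2 + (w (j, k, False))^2 \<le> 2 * weight_sqnorm n nk w"
      using that member_le_sum[of "(i, k, True)" "{..<n} \<times> {..<nk} \<times> UNIV" "\<lambda>p. (w p)^2"]
        member_le_sum[of "(j, k, False)" "{..<n} \<times> {..<nk} \<times> UNIV" "\<lambda>p. (w p)^2"]
      unfolding weight_sqnorm_def by simp
    ultimately show ?thesis
      by (simp add: abs_mult abs_divide power2_eq_square divide_right_mono mult_mono' weight_sqnorm_nonneg)
  qed
  have "\<bar>scores n nk X w a b\<bar>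
      \<le> (\<Sum>i<n. \<Sum>j<n. \<Sum>k<nk. \<bar>X a i * X b j / n * (w (i, k, True) * w (j, k, False))\<bar>)"
    unfolding scores_eq_sum
    by (rule order_trans[OF sum_abs sum_mono], rule order_trans[OF sum_abs sum_mono], rule sum_abs)
  also have "\<dots> \<le> (\<Sum>i<n. \<Sum>j<n. \<Sum>k<nk. B^2 / n * weight_sqnorm n nk w)"
    by (intro sum_mono summand_le) auto
  also have "\<dots> = real n * real nk * B^2 * weight_sqnorm n nk w"
    by (cases "n = 0") (simp_all add: power2_eq_square)
  finally show ?thesis .
qed

lemma integrable_weight_sqnorm_cube:
  "integrable (gauss_weights n nk) (\<lambda>w. (weight_sqnorm n nk w)^3)"
proof -
  let ?I = "{..<n} \<times> {..<nk} \<times> (UNIV :: bool set)"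
  have cube: "(weight_sqnorm n nk w)^3 = (\<Sum>p\<in>?I. \<Sum>q\<in>?I. \<Sum>r\<in>?I. \<Prod>x\<in>#{#p, p, q, q, r, r#}. w x)" for w
    unfolding weight_sqnorm_def power3_eq_cube sum_distrib_right sum_distrib_left
    by (simp add: power2_eq_square mult_ac)
  show ?thesis
    unfolding cube gauss_weights_PiM
    by (intro Bochner_Integration.integrable_sum integrable_std_normal_PiM_monomial) auto
qed

lemma measurable_weight_coordinate [measurable]:
  "(\<lambda>w. w p) \<in> borel_measurable (gauss_weights n nk)"
proof (cases "p \<in> {..<n} \<times> {..<nk} \<times> UNIV")
  case True
  then show ?thesis unfolding gauss_weights_PiM by measurable
next
  case False
  \<comment> \<open>off the index set every point of the product space takes the value \<^term>\<open>undefined\<close>\<close>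
  have "(\<lambda>w. undefined :: real) \<in> borel_measurable (gauss_weights n nk)"
    by simp
  moreover have "\<And>w. w \<in> space (gauss_weights n nk) \<Longrightarrow> undefined = w p"
    using False unfolding gauss_weights_PiM space_PiM by (metis PiE_arb)
  ultimately show ?thesis
    by (rule measurable_cong[THEN iffD1, rotated])
qed

lemma measurable_Am:
  "(\<lambda>w. Am m n nk X \<tau> (WKof w) (WQof w) a b) \<in> borel_measurable (gauss_weights n nk)"
  unfolding Am_def softmax_row_def Ym_def WKof_def WQof_def by measurable

lemma abs_Am_le_2:
  assumes "b < m"
  shows "\<bar>Am m n nk X \<tau> W W' a b\<bar> \<le> 2"
proof -
  let ?s = "softmax_row m (\<lambda>c e. Ym n nk X W W' c e / \<tau>) a b"
  have "0 \<le> ?s" "?s \<le> 1" "0 \<le> 1 / real m" "1 / real m \<le> 1" "0 \<le> kron a b" "kron a b \<le> 1"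
    using softmax_row_nonneg softmax_row_le_1[OF assms] assms by (simp_all add: kron_def)
  then show ?thesis
    unfolding Am_def abs_le_iff by linarith
qed

lemma jet2_Am:
  assumes "b < m" "0 \<le> t" "\<And>c. c < m \<Longrightarrow> \<bar>scores n nk X w a c / \<tau>\<bar> \<le> t"
  shows "jet2 1260 t (Am m n nk X \<tau> (WKof w) (WQof w) a b) (kron a b)
           (scores_lin m n nk X \<tau> w a b) (scores_quad m n nk X \<tau> w a b)"
proof -
  have "\<bar>softmax_row m (\<lambda>c e. scores n nk X w c e / \<tau>) a b - 1 / m - scores_lin m n nk X \<tau> w a b
          - scores_quad m n nk X \<tau> w a b\<bar> \<le> 1260 * t^3"
    using assms by (intro softmax_row_expansion) auto
  moreover have "\<bar>scores_lin m n nk X \<tau> w a b\<bar> \<le> 2 * t"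
    using assms(1,3) by (rule abs_softmax_lin_le)
  moreover have "\<bar>scores_quad m n nk X \<tau> w a b\<bar> \<le> 4 * t^2"
    using assms(1,3) by (rule abs_softmax_quad_le)
  ultimately show ?thesis
    unfolding jet2_def
  proof (intro conjI)
    show "\<bar>Am m n nk X \<tau> (WKof w) (WQof w) a b\<bar> \<le> 1260"
      using abs_Am_le_2[OF assms(1)] by (rule order_trans) simp
  qed (use assms(2) in \<open>auto simp: kron_def Am_def scores_def algebra_simps\<close>)
qed

context
  fixes m n nk :: nat and X :: "nat \<Rightarrow> nat \<Rightarrow> real" and \<tau> :: real
    and \<alpha> \<alpha>' \<beta> \<beta>' \<delta> \<delta>' \<omega> \<omega>' :: nat
begin

abbreviation Am_prod4 :: "(nat \<times> nat \<times> bool \<Rightarrow> real) \<Rightarrow> real" where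
  "Am_prod4 w \<equiv> Am m n nk X \<tau> (WKof w) (WQof w) \<alpha> \<alpha>' * Am m n nk X \<tau> (WKof w) (WQof w) \<beta> \<beta>'
    * Am m n nk X \<tau> (WKof w) (WQof w) \<delta> \<delta>' * Am m n nk X \<tau> (WKof w) (WQof w) \<omega> \<omega>'"

abbreviation taylor2_Am_prod4 :: "(nat \<times> nat \<times> bool \<Rightarrow> real) \<Rightarrow> real" where
  "taylor2_Am_prod4 w \<equiv> taylor2_prod4 (kron \<alpha> \<alpha>') (kron \<beta> \<beta>') (kron \<delta> \<delta>') (kron \<omega> \<omega>')
     (scores_lin m n nk X \<tau> w \<alpha> \<alpha>') (scores_lin m n nk X \<tau> w \<beta> \<beta>')
     (scores_lin m n nk X \<tau> w \<delta> \<delta>') (scores_lin m n nk X \<tau> w \<omega> \<omega>')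
     (scores_quad m n nk X \<tau> w \<alpha> \<alpha>') (scores_quad m n nk X \<tau> w \<beta> \<beta>')
     (scores_quad m n nk X \<tau> w \<delta> \<delta>') (scores_quad m n nk X \<tau> w \<omega> \<omega>')"

lemma integrable_Am_prod4:
  assumes "\<alpha>' < m" "\<beta>' < m" "\<delta>' < m" "\<omega>' < m"
  shows "integrable (gauss_weights n nk) Am_prod4"
proof (rule finite_measure.integrable_const_bound[OF finite_measure_gauss_weights, where B = "2 * 2 * 2 * 2"])
  show "AE w in gauss_weights n nk. norm (Am_prod4 w) \<le> 2 * 2 * 2 * 2"
    using abs_Am_le_2[OF assms(1)] abs_Am_le_2[OF assms(2)] abs_Am_le_2[OF assms(3)] abs_Am_le_2[OF assms(4)]
    unfolding real_norm_def abs_mult by (intro AE_I2 mult_mono) auto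
qed (intro borel_measurable_times measurable_Am)

lemma abs_Am_prod4_minus_taylor2_le:
  assumes X: "\<And>a i. a < m \<Longrightarrow> i < n \<Longrightarrow> \<bar>X a i\<bar> \<le> B" and "0 < \<tau>"
    and "\<alpha> < m" "\<alpha>' < m" "\<beta> < m" "\<beta>' < m" "\<delta> < m" "\<delta>' < m" "\<omega> < m" "\<omega>' < m"
  shows "\<bar>Am_prod4 w - taylor2_Am_prod4 w\<bar> \<le> 7^3 * 1260^4 * (real n * real nk * B^2 * weight_sqnorm n nk w / \<tau>)^3"
proof -
  define t where "t = real n * real nk * B^2 * weight_sqnorm n nk w / \<tau>"
  have "0 \<le> t"
    unfolding t_def using \<open>0 < \<tau>\<close> weight_sqnorm_nonneg by simp
  have scores: "\<bar>scores n nk X w a c / \<tau>\<bar> \<le> t" if "a < m" "c < m" for a c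
    unfolding t_def abs_divide using abs_scores_le[OF X that] \<open>0 < \<tau>\<close> by (simp add: divide_right_mono)
  have jet: "jet2 1260 t (Am m n nk X \<tau> (WKof w) (WQof w) a b) (kron a b)
      (scores_lin m n nk X \<tau> w a b) (scores_quad m n nk X \<tau> w a b)" if "a < m" "b < m" for a b
    using that \<open>0 \<le> t\<close> scores by (intro jet2_Am) auto
  show ?thesis
    using abs_prod4_minus_taylor2_le[OF \<open>0 \<le> t\<close> jet jet jet jet] assms(3-) unfolding t_def by simp
qed

lemma integrable_taylor2_Am_prod4: "integrable (gauss_weights n nk) taylor2_Am_prod4"
  unfolding taylor2_prod4_eq_linear_combination
  by (intro Bochner_Integration.integrable_add integrable_mult_right integrable_scores_lin integrable_scores_quad
      integrable_scores_lin_mult finite_measure.integrable_const finite_measure_gauss_weights)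

lemma integral_taylor2_Am_prod4:
  assumes "m > 0"
  shows "(\<integral>w. taylor2_Am_prod4 w \<partial>gauss_weights n nk) =
     kron \<alpha> \<alpha>' * kron \<beta> \<beta>' * kron \<delta> \<delta>' * kron \<omega> \<omega>'
        + real nk / (\<tau>^2 * (real m)^2) *
           (kron \<alpha> \<alpha>' * kron \<beta> \<beta>' * S1 m n X \<delta> \<delta>' \<omega> \<omega>'
          + kron \<alpha> \<alpha>' * kron \<delta> \<delta>' * S1 m n X \<beta> \<beta>' \<omega> \<omega>'
          + kron \<alpha> \<alpha>' * kron \<omega> \<omega>' * S1 m n X \<beta> \<beta>' \<delta> \<delta>'
          + kron \<beta> \<beta>' * kron \<delta> \<delta>' * S1 m n X \<alpha> \<alpha>' \<omega> \<omega>'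
          + kron \<beta> \<beta>' * kron \<omega> \<omega>' * S1 m n X \<alpha> \<alpha>' \<delta> \<delta>'
          + kron \<omega> \<omega>' * kron \<delta> \<delta>' * S1 m n X \<alpha> \<alpha>' \<beta> \<beta>')
        + real nk / (2 * \<tau>^2 * real m) *
           (kron \<alpha> \<alpha>' * kron \<beta> \<beta>' * kron \<delta> \<delta>' * S2 m n X \<omega> \<omega>'
          + kron \<alpha> \<alpha>' * kron \<beta> \<beta>' * kron \<omega> \<omega>' * S2 m n X \<delta> \<delta>'
          + kron \<alpha> \<alpha>' * kron \<omega> \<omega>' * kron \<delta> \<delta>' * S2 m n X \<beta> \<beta>'
          + kron \<omega> \<omega>' * kron \<beta> \<beta>' * kron \<delta> \<delta>' * S2 m n X \<alpha> \<alpha>')"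
  unfolding taylor2_prod4_eq_linear_combination
  using assms prob_space.prob_space[OF prob_space_gauss_weights]
  by (simp add: Bochner_Integration.integrable_add integrable_scores_lin integrable_scores_quad
      integrable_scores_lin_mult finite_measure.integrable_const[OF finite_measure_gauss_weights]
      integral_scores_lin integral_scores_quad integral_scores_lin_mult add_divide_distrib power2_eq_square algebra_simps)

lemma abs_integral_Am_prod4_minus_taylor2_le:
  assumes X: "\<And>a i. a < m \<Longrightarrow> i < n \<Longrightarrow> \<bar>X a i\<bar> \<le> B" and "0 < \<tau>"
    and "\<alpha> < m" "\<alpha>' < m" "\<beta> < m" "\<beta>' < m" "\<delta> < m" "\<delta>' < m" "\<omega> < m" "\<omega>' < m"
  shows "\<bar>(\<integral>w. Am_prod4 w \<partial>gauss_weights n nk) - (\<integral>w. taylor2_Am_prod4 w \<partial>gauss_weights n nk)\<bar>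
    \<le> 7^3 * 1260^4 * (real n * real nk * B^2)^3 / \<tau>^3 * (\<integral>w. (weight_sqnorm n nk w)^3 \<partial>gauss_weights n nk)"
proof -
  have "\<bar>(\<integral>w. Am_prod4 w \<partial>gauss_weights n nk) - (\<integral>w. taylor2_Am_prod4 w \<partial>gauss_weights n nk)\<bar>
      \<le> (\<integral>w. 7^3 * 1260^4 * (real n * real nk * B^2 * weight_sqnorm n nk w / \<tau>)^3 \<partial>gauss_weights n nk)"
    using assms
    by (intro abs_integral_diff_le_integral integrable_Am_prod4 integrable_taylor2_Am_prod4 abs_Am_prod4_minus_taylor2_le)
      (auto simp: power_divide power_mult_distrib integrable_weight_sqnorm_cube)
  also have "\<dots> = (\<integral>w. 7^3 * 1260^4 * (real n * real nk * B^2)^3 / \<tau>^3 * (weight_sqnorm n nk w)^3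
      \<partial>gauss_weights n nk)"
    by (intro Bochner_Integration.integral_cong refl) (simp add: power_divide power_mult_distrib)
  finally show ?thesis
    by (simp only: integral_mult_right_zero)
qed

end

theorem lemmaC4:
  fixes m n nk :: nat and X :: "nat \<Rightarrow> nat \<Rightarrow> real"
    and \<alpha> \<alpha>' \<beta> \<beta>' \<delta> \<delta>' \<omega> \<omega>' :: nat
  assumes "n > 0"
    and "\<alpha> < m" "\<alpha>' < m" "\<beta> < m" "\<beta>' < m" "\<delta> < m" "\<delta>' < m" "\<omega> < m" "\<omega>' < m"
  shows "\<exists>C T. \<forall>\<tau>::real. \<tau> \<ge> T \<longrightarrow>
    \<bar>(\<integral>w. Am m n nk X \<tau> (WKof w) (WQof w) \<alpha> \<alpha>' * Am m n nk X \<tau> (WKof w) (WQof w) \<beta> \<beta>'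
            * Am m n nk X \<tau> (WKof w) (WQof w) \<delta> \<delta>' * Am m n nk X \<tau> (WKof w) (WQof w) \<omega> \<omega>'
          \<partial>gauss_weights n nk)
     - (kron \<alpha> \<alpha>' * kron \<beta> \<beta>' * kron \<delta> \<delta>' * kron \<omega> \<omega>'
        + real nk / (\<tau>^2 * (real m)^2) *
           (kron \<alpha> \<alpha>' * kron \<beta> \<beta>' * S1 m n X \<delta> \<delta>' \<omega> \<omega>'
          + kron \<alpha> \<alpha>' * kron \<delta> \<delta>' * S1 m n X \<beta> \<beta>' \<omega> \<omega>'
          + kron \<alpha> \<alpha>' * kron \<omega> \<omega>' * S1 m n X \<beta> \<beta>' \<delta> \<delta>'
          + kron \<beta> \<beta>' * kron \<delta> \<delta>' * S1 m n X \<alpha> \<alpha>' \<omega> \<omega>'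
          + kron \<beta> \<beta>' * kron \<omega> \<omega>' * S1 m n X \<alpha> \<alpha>' \<delta> \<delta>'
          + kron \<omega> \<omega>' * kron \<delta> \<delta>' * S1 m n X \<alpha> \<alpha>' \<beta> \<beta>')
        + real nk / (2 * \<tau>^2 * real m) *
           (kron \<alpha> \<alpha>' * kron \<beta> \<beta>' * kron \<delta> \<delta>' * S2 m n X \<omega> \<omega>'
          + kron \<alpha> \<alpha>' * kron \<beta> \<beta>' * kron \<omega> \<omega>' * S2 m n X \<delta> \<delta>'
          + kron \<alpha> \<alpha>' * kron \<omega> \<omega>' * kron \<delta> \<delta>' * S2 m n X \<beta> \<beta>'
          + kron \<omega> \<omega>' * kron \<beta> \<beta>' * kron \<delta> \<delta>' * S2 m n X \<alpha> \<alpha>'))\<bar>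
     \<le> C * real nk / \<tau>^3"
proof -
  obtain B where B: "\<And>a i. a < m \<Longrightarrow> i < n \<Longrightarrow> \<bar>X a i\<bar> \<le> B"
    using matrix_entries_bounded[of m n X] by blast
  define C where "C = 7^3 * 1260^4 * (real n * B^2)^3 * (real nk)^2
    * (\<integral>w. (weight_sqnorm n nk w)^3 \<partial>gauss_weights n nk)"
  have C: "7^3 * 1260^4 * (real n * real nk * B^2)^3 / \<tau>^3 * (\<integral>w. (weight_sqnorm n nk w)^3 \<partial>gauss_weights n nk)
      = C * real nk / \<tau>^3" for \<tau> :: real
    unfolding C_def by (simp add: power_mult_distrib power2_eq_square power3_eq_cube)
  have "\<bar>(\<integral>w. Am_prod4 m n nk X \<tau> \<alpha> \<alpha>' \<beta> \<beta>' \<delta> \<delta>' \<omega> \<omega>' w \<partial>gauss_weights n nk)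
      - (\<integral>w. taylor2_Am_prod4 m n nk X \<tau> \<alpha> \<alpha>' \<beta> \<beta>' \<delta> \<delta>' \<omega> \<omega>' w \<partial>gauss_weights n nk)\<bar>
      \<le> C * real nk / \<tau>^3" if "1 \<le> \<tau>" for \<tau>
    using abs_integral_Am_prod4_minus_taylor2_le[where m = m and n = n and nk = nk and X = X and B = B and \<tau> = \<tau>,
        OF B _ assms(2-), unfolded C] that
    by simp
  moreover note integral_taylor2_Am_prod4[of m]
  ultimately show ?thesis
    using assms(2) by (rule_tac exI[of _ C], rule_tac exI[of _ 1]) auto
qed

end
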